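(* Let $\Gamma$ be the first Grigorchuk group with generators $a,b,c,d$, acting on the right on $\{0,1\}^{\mathbb N}$, and let $\rho=111\cdots$. For a word $w=w_1\cdots w_n$ over $\{a,b,c,d\}$ set $\delta(w)=\#\{\rho\,w_{i+1}\cdots w_n: i=0,\dots,n\}$. Let $\eta$ be the real root of $t^3+t^2+t-2$. There exists a constant $C$ such that for every $n\in\mathbb N$ there exists a word $w_n$ over $\{a,b,c,d\}$ of length at most $C(2/\eta)^n$ with $\delta(w_n)\ge 2^n$.
   Context: The first Grigorchuk group $\Gamma$ is the group of permutations of $\{0,1\}^{\mathbb N}$ (acting on the right) generated by $a,b,c,d$, defined recursively for $x\in\{0,1\}$ and infinite binary sequences $u$ by: $(xu)a=(1-x)u$; $(0u)b=0(ua)$, $(1u)b=1(uc)$; $(0u)c=0(ua)$, $(1u)c=1(ud)$; $(0u)d=0u$, $(1u)d=1(ub)$. *)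

theory Defs
  imports Complex_Main
begin

text \<open>Generators of the first Grigorchuk group. Binary digits are encoded as
  booleans: False = 0, True = 1.\<close>
datatype gen = A | B | C | D

fun act_fin :: "gen \<Rightarrow> bool list \<Rightarrow> bool list" where
  "act_fin g [] = []"
| "act_fin A (x # u) = (\<not> x) # u"
| "act_fin B (False # u) = False # act_fin A u"
| "act_fin B (True # u) = True # act_fin C u"
| "act_fin C (False # u) = False # act_fin A u"
| "act_fin C (True # u) = True # act_fin D u"
| "act_fin D (False # u) = False # u"
| "act_fin D (True # u) = True # act_fin B u"

text \<open>Induced action on infinite binary sequences: the n-th digit of the
  image depends only on the first n+1 digits.\<close>
definition act :: "gen \<Rightarrow> (nat \<Rightarrow> bool) \<Rightarrow> (nat \<Rightarrow> bool)" where
  "act g u = (\<lambda>n. act_fin g (map u [0..<Suc n]) ! n)"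

text \<open>Right action of a word: u w_1 ... w_n applies w_1 first.\<close>
definition act_word :: "(nat \<Rightarrow> bool) \<Rightarrow> gen list \<Rightarrow> (nat \<Rightarrow> bool)" where
  "act_word u w = foldl (\<lambda>v g. act g v) u w"

definition rho :: "nat \<Rightarrow> bool" where
  "rho = (\<lambda>_. True)"

definition delta :: "gen list \<Rightarrow> nat" where
  "delta w = card {act_word rho (drop i w) | i. i \<le> length w}"

end

theory Submission
  imports Defs "HOL-Library.Sublist"
begin

text \<open>Consider the words \<open>a y\<^sub>1 a y\<^sub>2 \<dots> a y\<^sub>k a\<close> with \<open>y\<^sub>i \<in> {b, c, d}\<close>, and the
  substitution \<open>b \<mapsto> bdc, c \<mapsto> bb, d \<mapsto> cc\<close> on the letters \<open>y\<^sub>i\<close>. The sections at the two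
  first-level vertices of the word obtained by substituting are, up to one trailing \<open>a\<close>
  and the relation \<open>cd = b\<close>, the original word and the original word without its leading
  \<open>a\<close>; so each of them visits, along its suffixes, at least as many points of the orbit of
  \<open>\<rho>\<close> as the original word. Since points below different first-level vertices are
  distinct, substituting at least doubles \<open>\<delta>\<close> (up to an additive constant). Starting
  from \<open>ababa\<close> and substituting \<open>n\<close> times therefore gives \<open>\<delta> \<ge> 2\<^sup>n\<close>, while the length
  grows like \<open>(2/\<eta>)\<^sup>n\<close>, \<open>2/\<eta>\<close> being the Perron eigenvalue of the substitution.\<close>

definition scons :: "bool \<Rightarrow> (nat \<Rightarrow> bool) \<Rightarrow> nat \<Rightarrow> bool" where
  "scons x v = case_nat x v"

lemma scons_0 [simp]: "scons x v 0 = x"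
  and scons_Suc [simp]: "scons x v (Suc n) = v n"
  by (simp_all add: scons_def)

lemma scons_eq_iff [simp]: "scons x v = scons y w \<longleftrightarrow> x = y \<and> v = w"
proof
  assume eq: "scons x v = scons y w"
  show "x = y \<and> v = w"
    using fun_cong[OF eq, of 0] fun_cong[OF eq, of "Suc n" for n] by (simp add: fun_eq_iff)
qed simp

lemma scons_head_tail: "v = scons (v 0) (\<lambda>n. v (Suc n))"
  by (simp add: scons_def fun_eq_iff split: nat.split)

lemma rho_eq_scons: "rho = scons True rho"
  by (simp add: rho_def scons_def fun_eq_iff split: nat.split)

fun gen_section :: "bool \<Rightarrow> gen \<Rightarrow> gen list" where
  "gen_section x A = []"
| "gen_section True B = [C]"
| "gen_section False B = [A]"
| "gen_section True C = [D]"
| "gen_section False C = [A]"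
| "gen_section True D = [B]"
| "gen_section False D = []"

lemma length_gen_section_le: "length (gen_section x g) \<le> 1"
  by (cases x; cases g) auto

fun word_section :: "bool \<Rightarrow> gen list \<Rightarrow> gen list" where
  "word_section x [] = []"
| "word_section x (g # w) = gen_section x g @ word_section (if g = A then \<not> x else x) w"

lemma act_word_Nil [simp]: "act_word u [] = u"
  and act_word_Cons [simp]: "act_word u (g # w) = act_word (act g u) w"
  and act_word_append: "act_word u (w @ w') = act_word (act_word u w) w'"
  by (simp_all add: act_word_def)

lemma map_scons_upt: "map (scons x v) [0..<Suc (Suc m)] = x # map v [0..<Suc m]"
  by (simp only: map_upt_Suc scons_0 scons_Suc)

lemma act_scons:
  "act g (scons x v) = scons (if g = A then \<not> x else x) (act_word v (gen_section x g))"
proof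
  fix n
  show "act g (scons x v) n = scons (if g = A then \<not> x else x) (act_word v (gen_section x g)) n"
  proof (cases n)
    case 0
    then show ?thesis by (cases g; cases x; simp add: act_def)
  next
    case (Suc m)
    then show ?thesis by (cases g; cases x; simp add: act_def map_scons_upt del: upt_Suc)
  qed
qed

lemma act_word_scons:
  "act_word (scons x v) w = scons (x \<noteq> odd (count_list w A)) (act_word v (word_section x w))"
  by (induction w arbitrary: x v) (auto simp: act_scons act_word_append)

lemma act_A_A [simp]: "act A (act A v) = v"
proof -
  obtain x s where "v = scons x s" using scons_head_tail by blast
  then show ?thesis by (simp add: act_scons)
qed

text \<open>The three identities are proved together: on the subtree below each vertex, each
  one reduces to another one.\<close>
lemma klein_relations:
  "act D (act C v) n = act B v n \<and> act B (act D v) n = act C v n \<and> act C (act B v) n = act D v n"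
proof (induction n arbitrary: v)
  case 0
  obtain x s where "v = scons x s" using scons_head_tail by blast
  then show ?case by (cases x) (simp_all add: act_scons)
next
  case (Suc m)
  obtain x s where "v = scons x s" using scons_head_tail by blast
  then show ?case using Suc.IH by (cases x) (simp_all add: act_scons)
qed

lemma act_C_D: "act D (act C v) = act B v"
  using klein_relations by blast

definition rho_act :: "gen list \<Rightarrow> nat \<Rightarrow> bool" where
  "rho_act w = act_word rho w"

lemma rho_act_eq_scons:
  "rho_act w = scons (even (count_list w A)) (rho_act (word_section True w))"
  by (subst rho_act_def, subst rho_eq_scons) (simp add: act_word_scons rho_act_def)

lemma set_suffixes_eq_drop: "set (suffixes w) = (\<lambda>i. drop i w) ` {..length w}"
proof -
  have "suffix s w \<Longrightarrow> s \<in> (\<lambda>i. drop i w) ` {..length w}" for s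
    unfolding suffix_def by (auto intro!: image_eqI[where x = "length w - length s"])
  then show ?thesis by (auto simp: suffix_drop)
qed

lemma delta_eq_card_suffixes: "delta w = card (rho_act ` set (suffixes w))"
proof -
  have "{act_word rho (drop i w) |i. i \<le> length w} = rho_act ` set (suffixes w)"
    by (auto simp: set_suffixes_eq_drop rho_act_def)
  then show ?thesis by (simp add: delta_def)
qed

lemma delta_Cons_le: "delta (g # w) \<le> Suc (delta w)"
  by (simp add: delta_eq_card_suffixes card_insert_if)

lemma delta_snoc_le: "delta (w @ [g]) \<le> Suc (delta w)"
proof -
  have "rho_act ` set (suffixes (w @ [g])) = insert (rho_act []) (act g ` rho_act ` set (suffixes w))"
    by (simp add: image_image rho_act_def act_word_append)
  then have "delta (w @ [g]) \<le> Suc (card (act g ` rho_act ` set (suffixes w)))"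
    by (simp add: delta_eq_card_suffixes card_insert_le_m1 card_insert_if)
  also have "\<dots> \<le> Suc (delta w)"
    by (simp add: delta_eq_card_suffixes card_image_le)
  finally show ?thesis .
qed

lemma delta_append_le: "delta (w @ u) \<le> delta w + length u"
proof (induction u rule: rev_induct)
  case (snoc g u)
  then show ?case
    using delta_snoc_le[of "w @ u" g] by simp
qed simp

definition same_action :: "gen list \<Rightarrow> gen list \<Rightarrow> bool" where
  "same_action w w' \<longleftrightarrow> (\<forall>v. act_word v w = act_word v w')"

definition simulates :: "gen list \<Rightarrow> gen list \<Rightarrow> bool" where
  "simulates w' w \<longleftrightarrow> same_action w' w \<and> (\<forall>t. suffix t w \<longrightarrow> (\<exists>t'. suffix t' w' \<and> same_action t' t))"

lemma simulates_refl: "simulates w w"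
  by (auto simp: simulates_def same_action_def)

lemma simulates_Cons:
  assumes "simulates w' w" and "same_action u [g]"
  shows "simulates (u @ w') (g # w)"
proof -
  have "same_action (u @ w') (g # w)"
    using assms by (simp add: simulates_def same_action_def act_word_append)
  then show ?thesis
    using assms(1) by (auto simp: simulates_def suffix_Cons intro: suffix_appendI)
qed

lemma delta_le_if_simulates:
  assumes "simulates w' w"
  shows "delta w \<le> delta w'"
proof -
  have "rho_act ` set (suffixes w) \<subseteq> rho_act ` set (suffixes w')"
  proof
    fix p assume "p \<in> rho_act ` set (suffixes w)"
    then obtain t where "suffix t w" and p: "p = rho_act t" by auto
    then obtain t' where "suffix t' w'" and "same_action t' t"
      using assms by (auto simp: simulates_def)
    then have "p = rho_act t'"
      using p by (simp add: same_action_def rho_act_def)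
    with \<open>suffix t' w'\<close> show "p \<in> rho_act ` set (suffixes w')"
      by simp
  qed
  then show ?thesis
    by (simp add: delta_eq_card_suffixes card_mono)
qed

datatype letter = Lb | Lc | Ld

fun gen_of :: "letter \<Rightarrow> gen" where
  "gen_of Lb = B" | "gen_of Lc = C" | "gen_of Ld = D"

lemma gen_of_neq_A [simp]: "gen_of y \<noteq> A"
  by (cases y) auto

fun alt_tail :: "letter list \<Rightarrow> gen list" where
  "alt_tail [] = []"
| "alt_tail (y # ys) = gen_of y # A # alt_tail ys"

definition alt_word :: "letter list \<Rightarrow> gen list" where
  "alt_word ys = A # alt_tail ys"

lemma length_alt_word: "length (alt_word ys) = 2 * length ys + 1"
  by (induction ys) (auto simp: alt_word_def)

lemma suffix_alt_word: "suffix zs ys \<Longrightarrow> suffix (alt_word zs) (alt_word ys)"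
  by (induction ys) (auto simp: suffix_Cons alt_word_def)

lemma suffix_alt_tail_alt_word: "suffix (alt_tail ys) (alt_word ys)"
  by (simp add: alt_word_def suffix_ConsI)

fun alt_section :: "bool \<Rightarrow> letter list \<Rightarrow> gen list" where
  "alt_section x [] = []"
| "alt_section x (y # ys) = gen_section x (gen_of y) @ alt_section (\<not> x) ys"

lemma alt_section_append:
  "alt_section x (ys @ zs) = alt_section x ys @ alt_section (x = even (length ys)) zs"
  by (induction ys arbitrary: x) (auto intro!: arg_cong[where f = "\<lambda>x. alt_section x zs"])

lemma word_section_alt_tail: "word_section x (alt_tail ys) = alt_section x ys"
  by (induction ys arbitrary: x) auto

lemma count_A_alt_tail: "count_list (alt_tail ys) A = length ys"
  by (induction ys) auto

lemma rho_act_alt_tail: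
  "rho_act (alt_tail ys) = scons (even (length ys)) (rho_act (alt_section True ys))"
  by (subst rho_act_eq_scons) (simp add: word_section_alt_tail count_A_alt_tail)

lemma rho_act_alt_word:
  "rho_act (alt_word ys) = scons (odd (length ys)) (rho_act (alt_section False ys))"
  by (subst rho_act_eq_scons) (simp add: alt_word_def word_section_alt_tail count_A_alt_tail)

lemma suffix_short_append_iff:
  "length u \<le> 1 \<Longrightarrow> suffix t (u @ v) \<longleftrightarrow> t = u @ v \<or> suffix t v"
  by (cases u) (auto simp: suffix_Cons)

lemma suffix_alt_section:
  assumes "suffix t (alt_section (x = even (length ys)) ys)"
  shows "\<exists>zs. suffix zs ys \<and> t = alt_section (x = even (length zs)) zs"
  using assms
proof (induction ys arbitrary: t)
  case (Cons y ys)
  have "suffix t (gen_section (x = odd (length ys)) (gen_of y) @ alt_section (x = even (length ys)) ys)"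
    using Cons.prems by simp
  then have "t = alt_section (x = even (length (y # ys))) (y # ys)
      \<or> suffix t (alt_section (x = even (length ys)) ys)"
    using suffix_short_append_iff[OF length_gen_section_le] by simp
  then show ?case
    using Cons.IH by (auto intro: suffix_ConsI)
qed simp

lemma rho_act_suffix_alt_section:
  assumes "suffix t (alt_section (x = even (length ys)) ys)"
  shows "scons x (rho_act t) \<in> rho_act ` set (suffixes (alt_word ys))"
proof -
  obtain zs where zs: "suffix zs ys" and t: "t = alt_section (x = even (length zs)) zs"
    using suffix_alt_section[OF assms] by blast
  have "scons x (rho_act t) \<in> {rho_act (alt_tail zs), rho_act (alt_word zs)}"
    using t by (cases x; cases "even (length zs)"; simp add: rho_act_alt_tail rho_act_alt_word)
  moreover have "suffix (alt_tail zs) (alt_word ys)" "suffix (alt_word zs) (alt_word ys)"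
    using suffix_alt_word[OF zs] suffix_alt_tail_alt_word suffix_order.trans by blast+
  ultimately show ?thesis by auto
qed

text \<open>Prefixing the digit \<open>x\<close> embeds the points visited by the section at \<open>x\<close> into
  those visited by \<open>alt_word ys\<close>, and the two images are disjoint.\<close>
lemma delta_alt_sections_le:
  "delta (alt_section (even (length ys)) ys) + delta (alt_section (odd (length ys)) ys)
    \<le> delta (alt_word ys)"
proof -
  let ?P = "\<lambda>x. scons x ` rho_act ` set (suffixes (alt_section (x = even (length ys)) ys))"
  have card_P: "card (?P x) = delta (alt_section (x = even (length ys)) ys)" for x
    by (simp add: delta_eq_card_suffixes card_image inj_on_def)
  have "?P True \<inter> ?P False = {}" by auto
  then have "delta (alt_section (even (length ys)) ys) + delta (alt_section (odd (length ys)) ys)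
      = card (?P True \<union> ?P False)"
    using card_P[of True] card_P[of False] by (simp add: card_Un_disjoint)
  also have "\<dots> \<le> delta (alt_word ys)"
    unfolding delta_eq_card_suffixes
    by (rule card_mono) (use rho_act_suffix_alt_section in auto)
  finally show ?thesis .
qed

fun refine_letter :: "letter \<Rightarrow> letter list" where
  "refine_letter Lb = [Lb, Ld, Lc]"
| "refine_letter Lc = [Lb, Lb]"
| "refine_letter Ld = [Lc, Lc]"

definition refine :: "letter list \<Rightarrow> letter list" where
  "refine ys = concat (map refine_letter ys)"

lemma refine_Nil [simp]: "refine [] = []"
  and refine_Cons [simp]: "refine (y # ys) = refine_letter y @ refine ys"
  by (simp_all add: refine_def)

lemma same_action_C_D: "same_action [C, D] [B]"
  by (simp add: same_action_def act_C_D)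

lemma alt_section_refine_simulates:
  "simulates (alt_section True (refine ys) @ (if odd (count_list ys Lb) then [A] else [])) (alt_tail ys)
   \<and> simulates (alt_section False (refine ys) @ (if even (count_list ys Lb) then [A] else [])) (alt_word ys)"
proof (induction ys)
  case Nil
  show ?case by (simp add: alt_word_def simulates_refl)
next
  case (Cons y ys)
  have C_D: "simulates (C # D # w') (B # w)" if "simulates w' w" for w' w
    using simulates_Cons[OF that same_action_C_D] by simp
  have same: "simulates (g # w') (g # w)" if "simulates w' w" for g w' w
    using simulates_Cons[OF that, of "[g]" g] by (simp add: same_action_def)
  note IH = Cons.IH[unfolded alt_word_def]
  show ?case
    by (cases y; simp add: alt_section_append alt_word_def split del: if_split;
        intro conjI C_D same; simp add: IH)
qed

lemma delta_refine_ge: "2 * delta (alt_word ys) \<le> delta (alt_word (refine ys)) + 3"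
proof -
  let ?r = "refine ys"
  have "delta (alt_tail ys) \<le> delta (alt_section True ?r @ (if odd (count_list ys Lb) then [A] else []))"
    using alt_section_refine_simulates delta_le_if_simulates by blast
  also have "\<dots> \<le> delta (alt_section True ?r) + 1"
    using delta_append_le by (rule order.trans) simp
  finally have tail: "delta (alt_tail ys) \<le> delta (alt_section True ?r) + 1" .
  have "delta (alt_word ys) \<le> delta (alt_section False ?r @ (if even (count_list ys Lb) then [A] else []))"
    using alt_section_refine_simulates delta_le_if_simulates by blast
  also have "\<dots> \<le> delta (alt_section False ?r) + 1"
    using delta_append_le by (rule order.trans) simp
  finally have word: "delta (alt_word ys) \<le> delta (alt_section False ?r) + 1" .
  have "delta (alt_word ys) \<le> delta (alt_tail ys) + 1"
    using delta_Cons_le by (simp add: alt_word_def)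
  moreover have "delta (alt_section True ?r) + delta (alt_section False ?r) \<le> delta (alt_word ?r)"
    using delta_alt_sections_le[of ?r] by (cases "even (length ?r)") simp_all
  ultimately show ?thesis
    using tail word by linarith
qed

lemma delta_alt_word_Lb_Lb: "4 \<le> delta (alt_word [Lb, Lb])"
proof -
  have p0: "rho_act [] = scons True (scons True rho)"
    by (simp add: rho_act_def flip: rho_eq_scons)
  have p1: "rho_act [A] = scons False (scons True rho)"
    by (subst rho_act_eq_scons) (simp add: rho_act_def flip: rho_eq_scons)
  have p2: "rho_act [A, B, A] = scons True (scons False (scons True rho))"
    by (subst rho_act_eq_scons) (simp add: p1)
  have p3: "rho_act [A, C] = scons False (rho_act [A])"
    by (subst rho_act_eq_scons) simp
  have p4: "rho_act [A, B, A, B, A] = scons False (rho_act [A, C])"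
    by (subst rho_act_eq_scons) simp
  have "card {rho_act [], rho_act [A], rho_act [A, B, A], rho_act [A, B, A, B, A]} = 4"
    by (simp add: p0 p1 p2 p3 p4)
  moreover have "{rho_act [], rho_act [A], rho_act [A, B, A], rho_act [A, B, A, B, A]}
      \<subseteq> rho_act ` set (suffixes (alt_word [Lb, Lb]))"
    by (simp add: alt_word_def)
  ultimately show ?thesis
    by (metis delta_eq_card_suffixes card_mono finite_imageI finite_set)
qed

lemma delta_refine_iterate_ge: "2 ^ n + 3 \<le> delta (alt_word ((refine ^^ n) [Lb, Lb]))"
proof (induction n)
  case (Suc n)
  then show ?case
    using delta_refine_ge[of "(refine ^^ n) [Lb, Lb]"] by simp
qed (use delta_alt_word_Lb_Lb in simp)

lemma root_bounds:
  fixes \<eta> :: real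
  assumes "\<eta> ^ 3 + \<eta> ^ 2 + \<eta> - 2 = 0"
  shows "0 < \<eta>" and "\<eta> < 1"
proof -
  have factor: "\<eta> * (\<eta> ^ 2 + \<eta> + 1) = 2"
    using assms by (simp add: power2_eq_square power3_eq_cube algebra_simps)
  have "\<eta> ^ 2 + \<eta> + 1 > 0"
    using zero_le_power2[of "\<eta> + 1/2"] by (simp add: power2_eq_square algebra_simps)
  with factor show "0 < \<eta>"
    by (metis zero_less_mult_pos2 zero_less_numeral)
  show "\<eta> < 1"
  proof (rule ccontr)
    assume "\<not> \<eta> < 1"
    then have "3 \<le> \<eta> ^ 2 + \<eta> + 1"
      using one_le_power[of \<eta> 2] by linarith
    then have "1 * 3 \<le> \<eta> * (\<eta> ^ 2 + \<eta> + 1)"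
      using \<open>\<not> \<eta> < 1\<close> by (intro mult_mono) auto
    with factor show False by simp
  qed
qed

text \<open>With \<open>e = \<eta>\<close>, \<open>(1, \<eta>, \<eta>\<^sup>2)\<close> is an eigenvector of the incidence matrix of \<open>refine\<close>
  for the eigenvalue \<open>2/\<eta>\<close>, so this weight grows by exactly that factor under \<open>refine\<close>.\<close>
fun letter_weight :: "real \<Rightarrow> letter \<Rightarrow> real" where
  "letter_weight e Lb = 1" | "letter_weight e Lc = e" | "letter_weight e Ld = e ^ 2"

definition weight :: "real \<Rightarrow> letter list \<Rightarrow> real" where
  "weight e ys = sum_list (map (letter_weight e) ys)"

lemma weight_Nil [simp]: "weight e [] = 0"
  and weight_Cons [simp]: "weight e (y # ys) = letter_weight e y + weight e ys"
  and weight_append [simp]: "weight e (ys @ zs) = weight e ys + weight e zs"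
  by (simp_all add: weight_def)

lemma weight_refine:
  fixes e :: real
  assumes "e ^ 3 + e ^ 2 + e - 2 = 0" and "e \<noteq> 0"
  shows "weight e (refine ys) = (2 / e) * weight e ys"
proof (induction ys)
  case (Cons y ys)
  have "1 + e ^ 2 + e = 2 / e"
    using assms by (simp add: field_simps power2_eq_square power3_eq_cube)
  then have "weight e (refine_letter y) = (2 / e) * letter_weight e y"
    using assms by (cases y) (simp_all add: power2_eq_square)
  then show ?case
    using Cons.IH by (simp add: distrib_left)
qed simp

lemma length_le_weight:
  fixes e :: real
  assumes "0 \<le> e" and "e \<le> 1"
  shows "real (length ys) * e ^ 2 \<le> weight e ys"
proof (induction ys)
  case (Cons y ys)
  have "e ^ 2 \<le> letter_weight e y"
    using assms by (cases y) (auto simp: power2_eq_square mult_le_one mult_left_le)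
  then show ?case
    using Cons.IH by (simp add: distrib_right)
qed simp

lemma weight_refine_iterate:
  fixes e :: real
  assumes "e ^ 3 + e ^ 2 + e - 2 = 0" and "e \<noteq> 0"
  shows "weight e ((refine ^^ n) ys) = (2 / e) ^ n * weight e ys"
  by (induction n) (simp_all add: weight_refine[OF assms])

theorem proposition4p7:
  fixes \<eta> :: real
  assumes "\<eta> ^ 3 + \<eta> ^ 2 + \<eta> - 2 = 0"
  shows "\<exists>K::real. \<forall>n::nat. \<exists>w::gen list.
           real (length w) \<le> K * (2 / \<eta>) ^ n \<and> delta w \<ge> 2 ^ n"
proof (intro exI allI)
  fix n :: nat
  have pos: "0 < \<eta>" and lt1: "\<eta> < 1"
    using root_bounds[OF assms] by auto
  let ?ys = "(refine ^^ n) [Lb, Lb]"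
  let ?q = "(2 / \<eta>) ^ n"
  have "1 \<le> ?q"
    using pos lt1 by (simp add: one_le_power)
  have "real (length ?ys) * \<eta> ^ 2 \<le> 2 * ?q"
    using length_le_weight[of \<eta> ?ys] weight_refine_iterate[OF assms] pos lt1 by simp
  then have "real (length ?ys) \<le> 2 * ?q / \<eta> ^ 2"
    using pos by (simp add: pos_le_divide_eq)
  then have "real (length (alt_word ?ys)) \<le> (4 / \<eta> ^ 2 + 1) * ?q"
    using \<open>1 \<le> ?q\<close> by (simp add: length_alt_word algebra_simps)
  moreover have "2 ^ n \<le> delta (alt_word ?ys)"
    using delta_refine_iterate_ge[of n] by simp
  ultimately show "real (length (alt_word ?ys)) \<le> (4 / \<eta> ^ 2 + 1) * ?q \<and> 2 ^ n \<le> delta (alt_word ?ys)"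
    by simp
qed

end
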